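(* There is no bounded continuous function $w:\mathbb R^2\to\mathbb R^2$ for which there exists a constant $c>0$ such that \[\bigl|\langle x-y,w(x)-w(y)\rangle\bigr|>c\,\|w(x)-w(y)\|\] for every pair $x,y\in\mathbb R^2$ with $\|x-y\|>1$.
   Context: $\langle\cdot,\cdot\rangle$ and $\|\cdot\|$ denote the standard inner product and Euclidean norm on $\mathbb R^2$. *)

theory Defs
  imports "HOL-Analysis.Analysis"
begin

end

theory Submission
  imports Defs
begin

text \<open>
  By continuity, and since the set of pairs at distance greater than 1 is connected in dimension
  at least 2, the inner product \<open>(x - y) \<bullet> (w x - w y)\<close> has a fixed sign there; replacing \<open>w\<close>
  by \<open>-w\<close> if necessary, \<open>w\<close> is coarsely monotone. Chaining this inequality along a segment puts
  every long increment \<open>w (x + h) - w x\<close> into the cone \<open>{v. c/2 * |h| * |v| \<le> h \<bullet> v}\<close>.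
  Along a ray the component \<open>a \<bullet> w (k a)\<close> increases and is bounded, and the cone condition turns
  this into convergence of \<open>w (k a)\<close> to a limit \<open>A a\<close>. The limits again satisfy a cone
  condition, which makes \<open>A\<close> locally constant, hence constant, on a sphere. But monotonicity
  along the rays through \<open>v\<close> and \<open>-v\<close> gives
  \<open>v \<bullet> (A v - A (-v)) \<ge> v \<bullet> (w v - w (-v)) > 0\<close>.
\<close>

definition coarse_monotone :: "real \<Rightarrow> ('a::real_inner \<Rightarrow> 'a) \<Rightarrow> bool" where
  "coarse_monotone c w \<longleftrightarrow>
     (\<forall>x y. norm (x - y) > 1 \<longrightarrow> c * norm (w x - w y) < (x - y) \<bullet> (w x - w y))"

text \<open>Junk unless \<open>norm a > 1\<close>, the case in which convergence is proved.\<close>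

definition ray_limit :: "('a::real_normed_vector \<Rightarrow> 'b::real_normed_vector) \<Rightarrow> 'a \<Rightarrow> 'b" where
  "ray_limit w a = lim (\<lambda>k. w (real k *\<^sub>R a))"

lemma coarse_monotoneD:
  assumes "coarse_monotone c w" "norm h > 1"
  shows "c * norm (w (x + h) - w x) < h \<bullet> (w (x + h) - w x)"
  using assms unfolding coarse_monotone_def by (metis add_diff_cancel_left')

lemma inner_increment_sign_cases:
  fixes w :: "'a::euclidean_space \<Rightarrow> 'a"
  assumes dim: "DIM('a) \<ge> 2" and cont: "continuous_on UNIV w"
    and nonzero: "\<And>x y. norm (x - y) > 1 \<Longrightarrow> (x - y) \<bullet> (w x - w y) \<noteq> 0"
  shows "(\<forall>x y. norm (x - y) > 1 \<longrightarrow> (x - y) \<bullet> (w x - w y) > 0)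
       \<or> (\<forall>x y. norm (x - y) > 1 \<longrightarrow> (x - y) \<bullet> (w x - w y) < 0)"
proof (rule ccontr)
  define S :: "('a \<times> 'a) set" where "S = UNIV \<times> - cball 0 1"
  define f where "f = (\<lambda>(y, h). h \<bullet> (w (y + h) - w y))"
  have f_eq: "f (y, x - y) = (x - y) \<bullet> (w x - w y)" for x y
    by (simp add: f_def)
  assume "\<not> ?thesis"
  then obtain x y x' y' where "norm (x - y) > 1" "f (y, x - y) \<le> 0"
    and "norm (x' - y') > 1" "f (y', x' - y') \<ge> 0"
    unfolding f_eq by (auto simp: not_less)
  then have "f (y, x - y) \<in> f ` S" "f (y', x' - y') \<in> f ` S" "f (y, x - y) \<le> 0" "0 \<le> f (y', x' - y')"
    by (auto simp: S_def)
  moreover have "connected (f ` S)"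
  proof (rule connected_continuous_image)
    show "continuous_on S f"
      unfolding f_def case_prod_unfold
      by (intro continuous_intros continuous_on_compose2[OF cont]) auto
    show "connected S"
      unfolding S_def using dim
      by (intro connected_Times connected_UNIV connected_complement_bounded_convex) auto
  qed
  ultimately have "0 \<in> f ` S"
    by (metis connectedD_interval)
  then obtain y h where "norm h > 1" "f (y, h) = 0"
    by (force simp: S_def not_le)
  then show False
    using nonzero[of "y + h" y] by (simp add: f_def)
qed

lemma coarse_monotone_up_to_sign:
  fixes w :: "'a::euclidean_space \<Rightarrow> 'a"
  assumes "DIM('a) \<ge> 2" "continuous_on UNIV w" "c \<ge> 0"
    and large: "\<And>x y. norm (x - y) > 1 \<Longrightarrow> c * norm (w x - w y) < \<bar>(x - y) \<bullet> (w x - w y)\<bar>"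
  shows "coarse_monotone c w \<or> coarse_monotone c (\<lambda>x. - w x)"
proof -
  have "(x - y) \<bullet> (w x - w y) \<noteq> 0" if "norm (x - y) > 1" for x y
    using large[OF that] mult_nonneg_nonneg[OF \<open>c \<ge> 0\<close> norm_ge_zero[of "w x - w y"]]
    by auto
  then consider
      "\<And>x y. norm (x - y) > 1 \<Longrightarrow> (x - y) \<bullet> (w x - w y) > 0"
    | "\<And>x y. norm (x - y) > 1 \<Longrightarrow> (x - y) \<bullet> (w x - w y) < 0"
    using inner_increment_sign_cases[OF assms(1,2)] by blast
  then show ?thesis
  proof cases
    case 1
    then have "coarse_monotone c w"
      unfolding coarse_monotone_def using large by (auto simp: abs_of_pos)
    then show ?thesis ..
  next
    case 2
    then have "coarse_monotone c (\<lambda>x. - w x)"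
      unfolding coarse_monotone_def using large
      by (auto simp: abs_of_neg norm_minus_commute inner_diff_right)
    then show ?thesis ..
  qed
qed

context
  fixes w :: "'a::real_inner \<Rightarrow> 'a" and c :: real
  assumes c_pos: "c > 0" and mono: "coarse_monotone c w"
begin

text \<open>
  Split \<open>h\<close> into \<open>n = \<lceil>|h|\<rceil> - 1\<close> equal steps, each longer than 1; as \<open>2 n \<ge> |h|\<close>,
  only a factor 2 is lost.
\<close>

lemma coarse_monotone_long_increment:
  assumes h: "norm h > 1"
  shows "(c / 2) * norm h * norm (w (x + h) - w x) \<le> h \<bullet> (w (x + h) - w x)"
proof -
  define n where "n = nat (\<lceil>norm h\<rceil> - 1)"
  have ceiling_ge: "\<lceil>norm h\<rceil> \<ge> 2"
    using h by (simp add: le_ceiling_iff)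
  have "real n = of_int \<lceil>norm h\<rceil> - 1"
    unfolding n_def by (subst of_nat_nat) (use ceiling_ge in auto)
  moreover have "real_of_int \<lceil>norm h\<rceil> \<ge> 2"
    using ceiling_ge by linarith
  ultimately have n_pos: "n > 0" and n_lt: "real n < norm h" and n_ge: "real n \<ge> norm h / 2"
    using ceiling_correct[of "norm h"] by linarith+
  define step where "step = h /\<^sub>R real n"
  have h_eq: "h = real n *\<^sub>R step"
    using n_pos by (simp add: step_def)
  have step_long: "norm step > 1"
    using n_pos n_lt by (simp add: step_def field_simps)
  define d where "d i = w (x + real (Suc i) *\<^sub>R step) - w (x + real i *\<^sub>R step)" for i
  have telescope: "(\<Sum>i<n. d i) = w (x + h) - w x"
    unfolding d_def h_eq by (subst sum_lessThan_telescope) simp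
  have d_bound: "(c / 2) * norm h * norm (d i) \<le> h \<bullet> d i" for i
  proof -
    have "x + real (Suc i) *\<^sub>R step = (x + real i *\<^sub>R step) + step"
      by (simp add: algebra_simps)
    then have "c * norm (d i) < step \<bullet> d i"
      using coarse_monotoneD[OF mono step_long] unfolding d_def by metis
    then have "real n * (c * norm (d i)) \<le> h \<bullet> d i"
      unfolding h_eq by (simp add: mult_left_mono)
    moreover have "(c / 2) * norm h * norm (d i) \<le> real n * (c * norm (d i))"
      using mult_right_mono[OF n_ge, of "c * norm (d i)"] c_pos by (simp add: algebra_simps)
    ultimately show ?thesis by linarith
  qed
  have "(c / 2) * norm h * norm (w (x + h) - w x) \<le> (\<Sum>i<n. (c / 2) * norm h * norm (d i))"
    unfolding telescope[symmetric] sum_distrib_left[symmetric] using c_pos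
    by (intro mult_left_mono norm_sum) auto
  also have "\<dots> \<le> (\<Sum>i<n. h \<bullet> d i)"
    by (intro sum_mono d_bound)
  also have "\<dots> = h \<bullet> (w (x + h) - w x)"
    by (simp add: telescope inner_sum_right[symmetric])
  finally show ?thesis .
qed

lemma ray_inner_incseq:
  assumes "norm a > 1"
  shows "incseq (\<lambda>k. a \<bullet> w (real k *\<^sub>R a))"
proof (rule incseq_SucI)
  fix k
  have "real k *\<^sub>R a + a = real (Suc k) *\<^sub>R a"
    by (simp add: algebra_simps)
  then have "c * norm (w (real (Suc k) *\<^sub>R a) - w (real k *\<^sub>R a))
      < a \<bullet> (w (real (Suc k) *\<^sub>R a) - w (real k *\<^sub>R a))"
    using coarse_monotoneD[OF mono assms, of "real k *\<^sub>R a"] by simp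
  moreover have "c * norm (w (real (Suc k) *\<^sub>R a) - w (real k *\<^sub>R a)) \<ge> 0"
    using c_pos by simp
  ultimately show "a \<bullet> w (real k *\<^sub>R a) \<le> a \<bullet> w (real (Suc k) *\<^sub>R a)"
    by (simp add: inner_diff_right)
qed

lemma ray_increment_norm_le:
  assumes a: "norm a > 1"
  shows "c / 2 * norm (w (real m *\<^sub>R a) - w (real k *\<^sub>R a))
           \<le> \<bar>a \<bullet> w (real m *\<^sub>R a) - a \<bullet> w (real k *\<^sub>R a)\<bar>"
proof -
  have ordered: "c / 2 * norm (w (real m *\<^sub>R a) - w (real k *\<^sub>R a))
           \<le> a \<bullet> w (real m *\<^sub>R a) - a \<bullet> w (real k *\<^sub>R a)" if "k < m" for k m
  proof -
    define h where "h = real (m - k) *\<^sub>R a"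
    define \<Delta> where "\<Delta> = w (real m *\<^sub>R a) - w (real k *\<^sub>R a)"
    have norm_h: "norm h = real (m - k) * norm a"
      by (simp add: h_def)
    have "real (m - k) \<ge> 1"
      using that by simp
    then have "norm a \<le> norm h" "real (m - k) \<le> norm h"
      unfolding norm_h using a mult_right_mono[of 1 "real (m - k)" "norm a"]
        mult_left_mono[of 1 "norm a" "real (m - k)"] by simp_all
    then have "norm h > 1"
      using a by linarith
    have x_h: "real k *\<^sub>R a + h = real m *\<^sub>R a"
      using that by (simp add: h_def of_nat_diff algebra_simps)
    have "real (m - k) * (c / 2 * norm \<Delta>) \<le> c / 2 * norm h * norm \<Delta>"
      using mult_right_mono[OF \<open>real (m - k) \<le> norm h\<close>, of "c / 2 * norm \<Delta>"] c_pos
      by (simp add: mult_ac)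
    also have "\<dots> \<le> h \<bullet> \<Delta>"
      using coarse_monotone_long_increment[OF \<open>norm h > 1\<close>, of "real k *\<^sub>R a"] x_h
      unfolding \<Delta>_def by simp
    also have "\<dots> = real (m - k) * (a \<bullet> \<Delta>)"
      by (simp add: h_def)
    finally show ?thesis
      using that by (simp add: \<Delta>_def inner_diff_right)
  qed
  show ?thesis
  proof (cases k m rule: linorder_cases)
    case less
    then show ?thesis using ordered[OF less] by linarith
  next
    case greater
    have "norm (w (real m *\<^sub>R a) - w (real k *\<^sub>R a)) = norm (w (real k *\<^sub>R a) - w (real m *\<^sub>R a))"
      by (rule norm_minus_commute)
    then show ?thesis
      using ordered[OF greater] by (simp add: abs_if)
  qed simp
qed

end

context
  fixes w :: "'a::euclidean_space \<Rightarrow> 'a" and c :: real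
  assumes c_pos: "c > 0" and mono: "coarse_monotone c w" and bounded_w: "bounded (range w)"
begin

lemma LIMSEQ_ray_limit:
  assumes a: "norm a > 1"
  shows "(\<lambda>k. w (real k *\<^sub>R a)) \<longlonglongrightarrow> ray_limit w a"
proof -
  define G where "G k = a \<bullet> w (real k *\<^sub>R a)" for k
  obtain B where B: "\<And>x. norm (w x) \<le> B"
    using bounded_w unfolding bounded_iff by blast
  have "G k \<le> norm a * B" for k
  proof -
    have "G k \<le> norm a * norm (w (real k *\<^sub>R a))"
      unfolding G_def by (rule norm_cauchy_schwarz)
    also have "\<dots> \<le> norm a * B"
      by (simp add: B mult_left_mono)
    finally show ?thesis .
  qed
  then obtain L where "G \<longlonglongrightarrow> L"
    using incseq_convergent[OF ray_inner_incseq[OF c_pos mono a]] unfolding G_def by blast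
  then have "Cauchy G"
    by (rule LIMSEQ_imp_Cauchy)
  have "Cauchy (\<lambda>k. w (real k *\<^sub>R a))"
  proof (rule CauchyI)
    fix e :: real
    assume "e > 0"
    then obtain N where N: "\<And>m n. m \<ge> N \<Longrightarrow> n \<ge> N \<Longrightarrow> norm (G m - G n) < c / 2 * e"
      using CauchyD[OF \<open>Cauchy G\<close>, of "c / 2 * e"] c_pos by auto
    have "norm (w (real m *\<^sub>R a) - w (real n *\<^sub>R a)) < e" if "m \<ge> N" "n \<ge> N" for m n
    proof -
      have "c / 2 * norm (w (real m *\<^sub>R a) - w (real n *\<^sub>R a)) < c / 2 * e"
        using ray_increment_norm_le[OF c_pos mono a, of m n] N[OF that]
        unfolding G_def real_norm_def by linarith
      then show ?thesis
        using c_pos by simp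
    qed
    then show "\<exists>N. \<forall>m\<ge>N. \<forall>n\<ge>N. norm (w (real m *\<^sub>R a) - w (real n *\<^sub>R a)) < e"
      by blast
  qed
  then show ?thesis
    unfolding ray_limit_def by (simp add: Cauchy_convergent_iff convergent_LIMSEQ_iff)
qed

lemma ray_limit_scaleR_nat:
  assumes "norm a > 1" "m > 0"
  shows "ray_limit w (real m *\<^sub>R a) = ray_limit w a"
proof -
  have "((\<lambda>k. w (real k *\<^sub>R a)) \<circ> (\<lambda>k. m * k)) \<longlonglongrightarrow> ray_limit w a"
    using LIMSEQ_ray_limit[OF assms(1)] \<open>m > 0\<close>
    by (intro LIMSEQ_subseq_LIMSEQ) (auto simp: strict_mono_def)
  then show ?thesis
    unfolding ray_limit_def by (intro limI) (simp add: o_def mult.commute)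
qed

lemma inner_le_ray_limit:
  assumes "norm a > 1"
  shows "a \<bullet> w a \<le> a \<bullet> ray_limit w a"
  using incseq_le[OF ray_inner_incseq[OF c_pos mono assms]
      tendsto_inner[OF tendsto_const LIMSEQ_ray_limit[OF assms]], of 1]
  by simp

lemma ray_limit_monotone:
  assumes a: "norm a > 1" and b: "norm b > 1" and ab: "norm (a - b) > 1"
  shows "c / 2 * norm (a - b) * norm (ray_limit w a - ray_limit w b)
           \<le> (a - b) \<bullet> (ray_limit w a - ray_limit w b)"
proof (rule LIMSEQ_le)
  let ?\<Delta> = "\<lambda>k. w (real k *\<^sub>R a) - w (real k *\<^sub>R b)"
  show "(\<lambda>k. c / 2 * norm (a - b) * norm (?\<Delta> k))
          \<longlonglongrightarrow> c / 2 * norm (a - b) * norm (ray_limit w a - ray_limit w b)"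
    by (intro tendsto_intros LIMSEQ_ray_limit a b)
  show "(\<lambda>k. (a - b) \<bullet> ?\<Delta> k) \<longlonglongrightarrow> (a - b) \<bullet> (ray_limit w a - ray_limit w b)"
    by (intro tendsto_intros LIMSEQ_ray_limit a b)
  have "c / 2 * norm (a - b) * norm (?\<Delta> k) \<le> (a - b) \<bullet> ?\<Delta> k" if "k \<ge> 1" for k
  proof -
    define h where "h = real k *\<^sub>R (a - b)"
    have "norm (a - b) \<le> norm h"
      using that mult_right_mono[of 1 "real k" "norm (a - b)"] by (simp add: h_def)
    then have "norm h > 1"
      using ab by linarith
    moreover have "real k *\<^sub>R b + h = real k *\<^sub>R a"
      by (simp add: h_def algebra_simps)
    ultimately have "real k * (c / 2 * norm (a - b) * norm (?\<Delta> k)) \<le> real k * ((a - b) \<bullet> ?\<Delta> k)"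
      using coarse_monotone_long_increment[OF c_pos mono, of h "real k *\<^sub>R b"]
      by (simp add: h_def mult_ac)
    then show ?thesis
      using that by simp
  qed
  then show "\<exists>N. \<forall>k\<ge>N. c / 2 * norm (a - b) * norm (?\<Delta> k) \<le> (a - b) \<bullet> ?\<Delta> k"
    by blast
qed

lemma ray_limit_locally_constant:
  assumes a: "norm a = 2" and b: "norm b = 2" and close: "3 * norm (a - b) < 2 * c"
  shows "ray_limit w a = ray_limit w b"
proof (rule ccontr)
  define D where "D = ray_limit w a - ray_limit w b"
  assume "ray_limit w a \<noteq> ray_limit w b"
  then have D_pos: "norm D > 0"
    by (simp add: D_def)
  have bound: "c * norm (ray_limit w x - ray_limit w y)
      \<le> (2 *\<^sub>R x - y) \<bullet> (ray_limit w x - ray_limit w y)"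
    if x: "norm x = 2" and y: "norm y = 2" for x y
  proof -
    have "norm (2 *\<^sub>R x - y) \<ge> 2"
      using norm_triangle_ineq2[of "2 *\<^sub>R x" y] x y by simp
    moreover have "ray_limit w (2 *\<^sub>R x) = ray_limit w x"
      using ray_limit_scaleR_nat[of x 2] x by simp
    ultimately have "c / 2 * norm (2 *\<^sub>R x - y) * norm (ray_limit w x - ray_limit w y)
        \<le> (2 *\<^sub>R x - y) \<bullet> (ray_limit w x - ray_limit w y)"
      using ray_limit_monotone[of "2 *\<^sub>R x" y] x y by auto
    moreover have "c * norm (ray_limit w x - ray_limit w y)
        \<le> c / 2 * norm (2 *\<^sub>R x - y) * norm (ray_limit w x - ray_limit w y)"
      using mult_right_mono[OF \<open>norm (2 *\<^sub>R x - y) \<ge> 2\<close>,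
          of "c / 2 * norm (ray_limit w x - ray_limit w y)"] c_pos
      by (simp add: mult_ac)
    ultimately show ?thesis
      by linarith
  qed
  have "2 * (c * norm D) \<le> (2 *\<^sub>R a - b) \<bullet> D + (2 *\<^sub>R b - a) \<bullet> (- D)"
    using bound[OF a b] bound[OF b a] by (simp add: D_def norm_minus_commute)
  also have "\<dots> = 3 * ((a - b) \<bullet> D)"
    by (simp add: inner_diff_left algebra_simps)
  also have "\<dots> \<le> 3 * norm (a - b) * norm D"
    using norm_cauchy_schwarz[of "a - b" D] by simp
  also have "\<dots> < 2 * c * norm D"
    using close D_pos by simp
  finally show False
    by simp
qed

lemma ray_limit_constant_on_sphere:
  assumes "DIM('a) \<ge> 2"
  shows "ray_limit w constant_on sphere 0 2"
proof (rule locally_constant_imp_constant)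
  show "connected (sphere (0::'a) 2)"
    using assms by (rule connected_sphere)
  fix a :: 'a
  assume "a \<in> sphere 0 2"
  then show "\<exists>T. openin (top_of_set (sphere 0 2)) T \<and> a \<in> T \<and> (\<forall>x\<in>T. ray_limit w x = ray_limit w a)"
    using c_pos
    by (intro exI[of _ "sphere 0 2 \<inter> ball a (2 * c / 3)"])
      (auto simp: dist_norm norm_minus_commute intro: ray_limit_locally_constant)
qed

end

lemma bounded_not_coarse_monotone:
  fixes w :: "'a::euclidean_space \<Rightarrow> 'a"
  assumes "DIM('a) \<ge> 2" and "c > 0" and "bounded (range w)"
  shows "\<not> coarse_monotone c w"
proof
  assume mono: "coarse_monotone c w"
  obtain v :: 'a where v: "norm v = 2"
    using vector_choose_size by (metis zero_le_numeral)
  have "ray_limit w (- v) = ray_limit w v"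
    using ray_limit_constant_on_sphere[OF assms(2) mono assms(3,1)] v
    unfolding constant_on_def by (metis mem_sphere_0 norm_minus_cancel)
  moreover have "v \<bullet> w v \<le> v \<bullet> ray_limit w v" "- v \<bullet> w (- v) \<le> - v \<bullet> ray_limit w (- v)"
    using inner_le_ray_limit[OF assms(2) mono assms(3), of v]
      inner_le_ray_limit[OF assms(2) mono assms(3), of "- v"] v by simp_all
  ultimately have "(2 *\<^sub>R v) \<bullet> (w v - w (- v)) \<le> 0"
    by (simp add: inner_diff_right)
  moreover have "- v + 2 *\<^sub>R v = v"
    by (simp add: scaleR_2)
  then have "c * norm (w v - w (- v)) < (2 *\<^sub>R v) \<bullet> (w v - w (- v))"
    using coarse_monotoneD[OF mono, of "2 *\<^sub>R v" "- v"] v by simp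
  moreover have "c * norm (w v - w (- v)) \<ge> 0"
    using \<open>c > 0\<close> by simp
  ultimately show False
    by linarith
qed

lemma no_bounded_continuous_abs_coarse_monotone:
  fixes w :: "'a::euclidean_space \<Rightarrow> 'a"
  assumes "DIM('a) \<ge> 2" "continuous_on UNIV w" "bounded (range w)" "c > 0"
    and "\<And>x y. norm (x - y) > 1 \<Longrightarrow> c * norm (w x - w y) < \<bar>(x - y) \<bullet> (w x - w y)\<bar>"
  shows False
proof -
  have "coarse_monotone c w \<or> coarse_monotone c (\<lambda>x. - w x)"
    using assms by (intro coarse_monotone_up_to_sign) auto
  moreover have "bounded (range (\<lambda>x. - w x))"
    using \<open>bounded (range w)\<close> by simp
  ultimately show False
    using bounded_not_coarse_monotone assms(1,3,4) by blast
qed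

theorem theorem4:
  shows "\<not> (\<exists>w :: real^2 \<Rightarrow> real^2.
            continuous_on UNIV w \<and> bounded (range w) \<and>
            (\<exists>c > 0. \<forall>x y. norm (x - y) > 1 \<longrightarrow>
                 \<bar>(x - y) \<bullet> (w x - w y)\<bar> > c * norm (w x - w y)))"
  using no_bounded_continuous_abs_coarse_monotone[where 'a = "real^2"] by force

end
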